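(* In the setting described in the context, let $q\in\{1,\dots,n\}$. The following are equivalent: (1) there exists a $q$-minitive capacity $\mu:2^{\mathcal C}\to L$ with $S_\mu(x^{(k)})=\alpha^{(k)}$ for all $k\in\{1,\dots,N\}$; (2) the reduced min–max system $(\Sigma_q)$ is consistent and there exists $A\subsetneq\mathcal C$ with $|A|=n-q$ and $f_q(A)=0$.
   Context: Let $\mathcal C=\{1,\dots,n\}$ and let $L$ be either a finite totally ordered set $0=\xi_1<\dots<\xi_l=1$ or $L=[0,1]$. A capacity is a map $\mu:2^{\mathcal C}\to L$ with $\mu(\emptyset)=0$, $\mu(\mathcal C)=1$, monotone for inclusion; it is $q$-minitive if for all $X$ with $|X|<n-q$, $\mu(X)=\min_{Y\supsetneq X,\ |Y|\ge n-q}\mu(Y)$. Sugeno integral: $S_\mu(x)=\max_{A\subseteq\mathcal C}\min(\min_{i\in A}x_i,\mu(A))$ with $\min_{i\in\emptyset}x_i=1$. Training data: $N$ pairs $(x^{(k)},\alpha^{(k)})$, $x^{(k)}\in L^n$, $\alpha^{(k)}\in L$. For $A\subsetneq\mathcal C$, $\gamma_{k,A}=\max_{i\in\mathcal C\setminus A}x^{(k)}_i$. The reduced system $(\Sigma_q)$ has unknowns $\xi_A\in L$ for $A\subsetneq\mathcal C$ with $|A|\ge n-q$ and equations $\min_{A\subsetneq\mathcal C,\ |A|\ge n-q}\max(\gamma_{k,A},\xi_A)=\alpha^{(k)}$, $k=1,\dots,N$; it is consistent if it has a solution in $L$. For such $A$, $f_q(A)=\max_{1\le k\le N}(\gamma_{k,A}\,\epsilon\,\alpha^{(k)})$,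 where $a\,\epsilon\,b=b$ if $a<b$ and $0$ if $a\ge b$. *)

theory Defs
  imports Main "HOL.Real"
begin

definition valid_scale :: "real set \<Rightarrow> bool" where
  "valid_scale L \<longleftrightarrow> L = {0..1} \<or> (finite L \<and> L \<subseteq> {0..1} \<and> 0 \<in> L \<and> 1 \<in> L)"

definition is_capacity :: "real set \<Rightarrow> nat \<Rightarrow> (nat set \<Rightarrow> real) \<Rightarrow> bool" where
  "is_capacity L n mu \<longleftrightarrow>
     (\<forall>A. A \<subseteq> {1..n} \<longrightarrow> mu A \<in> L) \<and> mu {} = 0 \<and> mu {1..n} = 1 \<and>
     (\<forall>A B. A \<subseteq> B \<longrightarrow> B \<subseteq> {1..n} \<longrightarrow> mu A \<le> mu B)"

definition q_minitive :: "nat \<Rightarrow> nat \<Rightarrow> (nat set \<Rightarrow> real) \<Rightarrow> bool" where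
  "q_minitive n q mu \<longleftrightarrow>
     (\<forall>X. X \<subseteq> {1..n} \<longrightarrow> card X < n - q \<longrightarrow>
        mu X = Min (mu ` {Y. X \<subset> Y \<and> Y \<subseteq> {1..n} \<and> card Y \<ge> n - q}))"

definition min_on :: "(nat \<Rightarrow> real) \<Rightarrow> nat set \<Rightarrow> real" where
  "min_on x A = (if A = {} then 1 else Min (x ` A))"

definition sugeno :: "nat \<Rightarrow> (nat set \<Rightarrow> real) \<Rightarrow> (nat \<Rightarrow> real) \<Rightarrow> real" where
  "sugeno n mu x = Max ((\<lambda>A. min (min_on x A) (mu A)) ` Pow {1..n})"

definition gamma :: "nat \<Rightarrow> (nat \<Rightarrow> nat \<Rightarrow> real) \<Rightarrow> nat \<Rightarrow> nat set \<Rightarrow> real" where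
  "gamma n x k A = Max ((x k) ` ({1..n} - A))"

definition sigma_idx :: "nat \<Rightarrow> nat \<Rightarrow> nat set set" where
  "sigma_idx n q = {A. A \<subset> {1..n} \<and> card A \<ge> n - q}"

definition sigma_consistent ::
  "real set \<Rightarrow> nat \<Rightarrow> nat \<Rightarrow> nat \<Rightarrow> (nat \<Rightarrow> nat \<Rightarrow> real) \<Rightarrow> (nat \<Rightarrow> real) \<Rightarrow> bool" where
  "sigma_consistent L n q N x \<alpha> \<longleftrightarrow>
     (\<exists>\<xi> :: nat set \<Rightarrow> real. (\<forall>A \<in> sigma_idx n q. \<xi> A \<in> L) \<and>
        (\<forall>k \<in> {1..N}. Min ((\<lambda>A. max (gamma n x k A) (\<xi> A)) ` sigma_idx n q) = \<alpha> k))"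

definition eps_op :: "real \<Rightarrow> real \<Rightarrow> real" where
  "eps_op a b = (if a < b then b else 0)"

text \<open>f_q(A) = max_k (gamma_{k,A} eps alpha_k); the maximum over the empty family
  (N = 0) is taken to be the bottom element 0 of L.\<close>
definition f_q :: "nat \<Rightarrow> nat \<Rightarrow> (nat \<Rightarrow> nat \<Rightarrow> real) \<Rightarrow> (nat \<Rightarrow> real) \<Rightarrow> nat set \<Rightarrow> real" where
  "f_q n N x \<alpha> A = Max (insert 0 ((\<lambda>k. eps_op (gamma n x k A) (\<alpha> k)) ` {1..N}))"

end

theory Submission
  imports Defs
begin

text \<open>For a capacity \<open>\<mu>\<close> the Sugeno integral has the dual form
  \<open>S\<^sub>\<mu>(x) = min\<^sub>A max(\<gamma>\<^sub>A, \<mu>(A))\<close> over the proper subsets \<open>A\<close>; if \<open>\<mu>\<close> is q-minitive, every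
  small \<open>A\<close> can be replaced by a large superset \<open>Y\<close> with \<open>\<mu>(Y) = \<mu>(A)\<close> and \<open>\<gamma>\<^sub>Y \<le> \<gamma>\<^sub>A\<close>, so the
  minimum may be taken over the unknowns of \<open>(\<Sigma>\<^sub>q)\<close> only. Hence an interpolating q-minitive
  capacity restricts to a solution of \<open>(\<Sigma>\<^sub>q)\<close>; moreover minitivity at \<open>\<emptyset>\<close> yields a set of size
  \<open>n - q\<close> of capacity 0, and \<open>f\<^sub>q\<close> vanishes on it.

  Conversely, by residuation \<open>f\<^sub>q(A)\<close> is the least \<open>v \<ge> 0\<close> with \<open>\<alpha>\<^sub>k \<le> max(\<gamma>\<^sub>k\<^sub>,\<^sub>A, v)\<close> for all \<open>k\<close>.
  So \<open>f\<^sub>q\<close> is monotone, lies below every solution of \<open>(\<Sigma>\<^sub>q)\<close> and is itself a solution when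
  one exists. Its q-minitive extension to the small sets is then a q-minitive capacity
  interpolating the data; \<open>\<mu>(\<emptyset>) = 0\<close> holds exactly because \<open>f\<^sub>q\<close> vanishes on some set
  of size \<open>n - q\<close>.\<close>

lemma Min_image_eqI:
  fixes v :: "'b::linorder"
  assumes "finite S" "\<forall>a\<in>S. v \<le> h a" "\<exists>a\<in>S. h a \<le> v"
  shows "Min (h ` S) = v"
proof -
  from assms(3) obtain a where a: "a \<in> S" "h a \<le> v" by blast
  with assms(2) have "h a = v" by (auto intro: antisym)
  with a assms(1,2) show ?thesis by (intro Min_eqI) auto
qed

lemma gamma_ge: "i \<in> {1..n} - A \<Longrightarrow> x k i \<le> gamma n x k A"
  unfolding gamma_def by (intro Max_ge) auto

lemma gamma_le:
  assumes "A \<subset> {1..n}" "\<forall>i\<in>{1..n} - A. x k i \<le> c"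
  shows "gamma n x k A \<le> c"
  unfolding gamma_def using assms by (subst Max_le_iff) auto

lemma gamma_antimono:
  assumes "A \<subseteq> B" "B \<subset> {1..n}"
  shows "gamma n x k B \<le> gamma n x k A"
  using assms by (intro gamma_le) (auto intro: gamma_ge)

lemma min_on_le: "finite B \<Longrightarrow> i \<in> B \<Longrightarrow> min_on y B \<le> y i"
  unfolding min_on_def by auto

lemma sugeno_le_max_gamma:
  assumes mono: "\<forall>A B. A \<subseteq> B \<longrightarrow> B \<subseteq> {1..n} \<longrightarrow> mu A \<le> mu B"
    and A: "A \<subset> {1..n}"
  shows "sugeno n mu (x k) \<le> max (gamma n x k A) (mu A)"
proof -
  have "min (min_on (x k) B) (mu B) \<le> max (gamma n x k A) (mu A)" if B: "B \<subseteq> {1..n}" for B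
  proof (cases "B \<subseteq> A")
    case True
    then have "mu B \<le> mu A" using mono A by blast
    then show ?thesis by linarith
  next
    case False
    then obtain i where i: "i \<in> B" "i \<notin> A" by blast
    have "min_on (x k) B \<le> x k i" using B i by (intro min_on_le) (auto intro: finite_subset)
    also have "\<dots> \<le> gamma n x k A" using B i by (intro gamma_ge) auto
    finally show ?thesis by linarith
  qed
  then show ?thesis unfolding sugeno_def by (subst Max_le_iff) auto
qed

lemma sugeno_ge_max_gamma:
  assumes mu0: "mu {} = 0" and mu1: "mu {1..n} = 1" and x1: "\<forall>i\<in>{1..n}. x k i \<le> 1"
  obtains B where "B \<subset> {1..n}" "max (gamma n x k B) (mu B) \<le> sugeno n mu (x k)"
proof -
  let ?S = "sugeno n mu (x k)"
  have term_le: "min (min_on (x k) B) (mu B) \<le> ?S" if "B \<subseteq> {1..n}" for B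
    unfolding sugeno_def using that by (intro Max_ge) auto
  define B where "B = {i\<in>{1..n}. ?S < x k i}"
  have B: "B \<subseteq> {1..n}" "finite B" unfolding B_def by auto
  have muB: "mu B \<le> ?S"
  proof (cases "B = {}")
    case True
    then show ?thesis using term_le[of "{}"] mu0 by (simp add: min_on_def)
  next
    case False
    have "\<forall>i\<in>B. ?S < x k i" by (simp add: B_def)
    then have "?S < min_on (x k) B" unfolding min_on_def using False B(2) by simp
    then show ?thesis using term_le[OF B(1)] by linarith
  qed
  have "B \<noteq> {1..n}"
  proof
    assume full: "B = {1..n}"
    have "B \<noteq> {}" using full mu0 mu1 by auto
    then obtain i where i: "i \<in> B" by blast
    then have "mu {1..n} < x k i" using muB full unfolding B_def by simp
    moreover have "x k i \<le> 1" using x1 i B(1) by blast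
    ultimately show False using mu1 by simp
  qed
  then have "B \<subset> {1..n}" using B by blast
  moreover from this have "gamma n x k B \<le> ?S" by (rule gamma_le) (auto simp: B_def)
  ultimately show ?thesis using muB that by simp
qed

lemma finite_sigma_idx: "finite (sigma_idx n q)"
  unfolding sigma_idx_def by (rule finite_subset[of _ "Pow {1..n}"]) auto

lemma sigma_idx_nonempty:
  assumes "1 \<le> q" "1 \<le> n"
  shows "sigma_idx n q \<noteq> {}"
proof -
  have "n \<in> {1..n}" using assms(2) by simp
  then have "{1..n} - {n} \<subset> {1..n}" by blast
  moreover have "card ({1..n} - {n}) = n - 1" using assms(2) by simp
  ultimately have "{1..n} - {n} \<in> sigma_idx n q" using assms(1) unfolding sigma_idx_def by simp
  then show ?thesis by blast
qed

definition sigma_solves ::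
  "nat \<Rightarrow> nat \<Rightarrow> nat \<Rightarrow> (nat \<Rightarrow> nat \<Rightarrow> real) \<Rightarrow> (nat \<Rightarrow> real) \<Rightarrow>
     (nat set \<Rightarrow> real) \<Rightarrow> bool" where
  "sigma_solves n q N x \<alpha> \<xi> \<longleftrightarrow>
     (\<forall>k \<in> {1..N}. Min ((\<lambda>A. max (gamma n x k A) (\<xi> A)) ` sigma_idx n q) = \<alpha> k)"

lemma sigma_consistent_iff:
  "sigma_consistent L n q N x \<alpha> \<longleftrightarrow>
     (\<exists>\<xi>. (\<forall>A \<in> sigma_idx n q. \<xi> A \<in> L) \<and> sigma_solves n q N x \<alpha> \<xi>)"
  unfolding sigma_consistent_def sigma_solves_def ..

lemma sigma_solves_cong:
  "\<forall>A \<in> sigma_idx n q. \<xi> A = \<xi>' A \<Longrightarrow>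
     sigma_solves n q N x \<alpha> \<xi> \<longleftrightarrow> sigma_solves n q N x \<alpha> \<xi>'"
  unfolding sigma_solves_def by (simp cong: image_cong)

definition large_supersets :: "nat \<Rightarrow> nat \<Rightarrow> nat set \<Rightarrow> nat set set" where
  "large_supersets n q X = {Y. X \<subset> Y \<and> Y \<subseteq> {1..n} \<and> card Y \<ge> n - q}"

lemma q_minitive_iff:
  "q_minitive n q mu \<longleftrightarrow>
     (\<forall>X. X \<subseteq> {1..n} \<longrightarrow> card X < n - q \<longrightarrow> mu X = Min (mu ` large_supersets n q X))"
  unfolding q_minitive_def large_supersets_def ..

lemma finite_large_supersets: "finite (large_supersets n q X)"
  unfolding large_supersets_def by (rule finite_subset[of _ "Pow {1..n}"]) auto

lemma full_in_large_supersets: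
  assumes "X \<subseteq> {1..n}" "card X < n - q"
  shows "{1..n} \<in> large_supersets n q X"
proof -
  have "X \<noteq> {1..n}" using assms(2) by auto
  then show ?thesis using assms unfolding large_supersets_def by auto
qed

lemma q_minitive_attained:
  assumes qm: "q_minitive n q mu" and X: "X \<subseteq> {1..n}"
  obtains Y where "X \<subseteq> Y" "Y \<subseteq> {1..n}" "n - q \<le> card Y" "mu X = mu Y"
proof (cases "n - q \<le> card X")
  case True
  then show ?thesis using that X by blast
next
  case False
  then have small: "card X < n - q" by simp
  then have "mu X = Min (mu ` large_supersets n q X)" using qm X unfolding q_minitive_iff by simp
  also have "\<dots> \<in> mu ` large_supersets n q X"
    using finite_large_supersets full_in_large_supersets[OF X small] by (intro Min_in) auto
  finally obtain Y where "Y \<in> large_supersets n q X" "mu X = mu Y" by blast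
  then show ?thesis using that unfolding large_supersets_def by auto
qed

lemma q_minitive_mono:
  assumes qm: "q_minitive n q mu"
    and mono_large:
      "\<forall>A B. A \<subseteq> B \<longrightarrow> B \<subseteq> {1..n} \<longrightarrow> n - q \<le> card A \<longrightarrow> mu A \<le> mu B"
  shows "\<forall>A B. A \<subseteq> B \<longrightarrow> B \<subseteq> {1..n} \<longrightarrow> mu A \<le> mu B"
proof (intro allI impI)
  fix A B assume AB: "A \<subseteq> B" "B \<subseteq> {1..n}"
  obtain Y where Y: "B \<subseteq> Y" "Y \<subseteq> {1..n}" "n - q \<le> card Y" "mu B = mu Y"
    using q_minitive_attained[OF qm AB(2)] .
  have "mu A \<le> mu Y"
  proof (cases "n - q \<le> card A")
    case True
    moreover have "A \<subseteq> Y" using AB(1) Y(1) by (rule subset_trans)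
    ultimately show ?thesis using mono_large Y(2) by blast
  next
    case False
    then have "A \<noteq> Y" using Y(3) by auto
    then have "Y \<in> large_supersets n q A"
      using AB(1) Y(1-3) unfolding large_supersets_def by blast
    moreover have "mu A = Min (mu ` large_supersets n q A)"
      using qm False AB unfolding q_minitive_iff by simp
    ultimately show ?thesis using finite_large_supersets by simp
  qed
  then show "mu A \<le> mu B" using Y by simp
qed

lemma sugeno_eq_Min_sigma_idx:
  assumes cap: "is_capacity L n mu" and qm: "q_minitive n q mu" and q: "1 \<le> q"
    and x1: "\<forall>i\<in>{1..n}. x k i \<le> 1"
  shows "sugeno n mu (x k) = Min ((\<lambda>A. max (gamma n x k A) (mu A)) ` sigma_idx n q)"
proof -
  let ?h = "\<lambda>A. max (gamma n x k A) (mu A)" and ?S = "sugeno n mu (x k)"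
  have mu0: "mu {} = 0" and mu1: "mu {1..n} = 1"
    and mono: "\<forall>A B. A \<subseteq> B \<longrightarrow> B \<subseteq> {1..n} \<longrightarrow> mu A \<le> mu B"
    using cap unfolding is_capacity_def by blast+
  obtain B where B: "B \<subset> {1..n}" "?h B \<le> ?S" using sugeno_ge_max_gamma[where x = x and k = k, OF mu0 mu1 x1] .
  obtain Y where Y: "B \<subseteq> Y" "Y \<subseteq> {1..n}" "n - q \<le> card Y" "mu B = mu Y"
    using q_minitive_attained[OF qm] B(1) by blast
  have "\<exists>A \<in> sigma_idx n q. ?h A \<le> ?S"
  proof (cases "Y = {1..n}")
    case True
    have "1 \<le> n" using B(1) by auto
    then obtain A where A: "A \<in> sigma_idx n q" using sigma_idx_nonempty[OF q] by blast
    then have "gamma n x k A \<le> 1" using x1 by (intro gamma_le) (auto simp: sigma_idx_def)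
    moreover have "mu A \<le> mu {1..n}" using mono A unfolding sigma_idx_def by blast
    moreover have "1 \<le> ?S" using B(2) Y(4) True mu1 by simp
    ultimately have "?h A \<le> ?S" using mu1 by auto
    then show ?thesis using A by blast
  next
    case False
    then have "Y \<in> sigma_idx n q" using Y unfolding sigma_idx_def by auto
    moreover have "gamma n x k Y \<le> gamma n x k B" using Y False by (intro gamma_antimono) auto
    ultimately have "?h Y \<le> ?S" using B(2) Y(4) by auto
    then show ?thesis using \<open>Y \<in> sigma_idx n q\<close> by blast
  qed
  moreover have "\<forall>A \<in> sigma_idx n q. ?S \<le> ?h A"
    using sugeno_le_max_gamma[OF mono] unfolding sigma_idx_def by blast
  ultimately show ?thesis using finite_sigma_idx by (intro Min_image_eqI[symmetric])
qed

lemma sigma_solves_iff_sugeno: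
  assumes "is_capacity L n mu" "q_minitive n q mu" "1 \<le> q"
    and "\<forall>k\<in>{1..N}. \<forall>i\<in>{1..n}. x k i \<le> 1"
  shows "sigma_solves n q N x \<alpha> mu \<longleftrightarrow> (\<forall>k\<in>{1..N}. sugeno n mu (x k) = \<alpha> k)"
  unfolding sigma_solves_def using sugeno_eq_Min_sigma_idx[OF assms(1-3)] assms(4) by simp

lemma q_minitive_capacity_null_set:
  assumes cap: "is_capacity L n mu" and qm: "q_minitive n q mu" and q: "1 \<le> q"
  obtains A where "A \<subset> {1..n}" "card A = n - q" "mu A = 0"
proof -
  have mu0: "mu {} = 0" and mu1: "mu {1..n} = 1"
    and mono: "\<forall>A B. A \<subseteq> B \<longrightarrow> B \<subseteq> {1..n} \<longrightarrow> mu A \<le> mu B"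
    using cap unfolding is_capacity_def by blast+
  obtain Y where Y: "Y \<subseteq> {1..n}" "n - q \<le> card Y" "mu {} = mu Y"
    using q_minitive_attained[OF qm, of "{}"] by auto
  obtain T where T: "T \<subseteq> Y" "card T = n - q" using obtain_subset_with_card_n[OF Y(2)] by blast
  have "mu {} \<le> mu T" "mu T \<le> mu Y" using mono T(1) Y(1) by blast+
  then have "mu T = 0" using Y(3) mu0 by simp
  moreover have "T \<noteq> {1..n}"
  proof
    assume "T = {1..n}"
    moreover have "{1..n} \<noteq> {}" using mu0 mu1 by force
    ultimately show False using T(2) q by simp
  qed
  ultimately show ?thesis using that T Y(1) by blast
qed

lemma f_q_nonneg: "0 \<le> f_q n N x \<alpha> A"
  unfolding f_q_def by (intro Max_ge) auto

lemma eps_op_le_iff: "0 \<le> v \<Longrightarrow> eps_op a b \<le> v \<longleftrightarrow> b \<le> max a v"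
  unfolding eps_op_def by auto

lemma f_q_le_iff:
  assumes "0 \<le> v"
  shows "f_q n N x \<alpha> A \<le> v \<longleftrightarrow> (\<forall>k\<in>{1..N}. \<alpha> k \<le> max (gamma n x k A) v)"
proof -
  have "f_q n N x \<alpha> A \<le> v \<longleftrightarrow> (\<forall>k\<in>{1..N}. eps_op (gamma n x k A) (\<alpha> k) \<le> v)"
    unfolding f_q_def using assms by (subst Max_le_iff) auto
  then show ?thesis using eps_op_le_iff[OF assms] by simp
qed

lemma le_max_gamma_f_q: "k \<in> {1..N} \<Longrightarrow> \<alpha> k \<le> max (gamma n x k A) (f_q n N x \<alpha> A)"
  using f_q_le_iff[OF f_q_nonneg] by blast

lemma f_q_mono:
  assumes "A \<subseteq> B" "B \<subset> {1..n}"
  shows "f_q n N x \<alpha> A \<le> f_q n N x \<alpha> B"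
proof -
  have "\<alpha> k \<le> max (gamma n x k A) (f_q n N x \<alpha> B)" if "k \<in> {1..N}" for k
    using le_max_gamma_f_q[OF that, of \<alpha> n x B] gamma_antimono[OF assms, of x k] by linarith
  then show ?thesis using f_q_le_iff[OF f_q_nonneg] by blast
qed

lemma f_q_in_scale:
  assumes "0 \<in> L" "\<forall>k\<in>{1..N}. \<alpha> k \<in> L"
  shows "f_q n N x \<alpha> A \<in> L"
proof -
  have "f_q n N x \<alpha> A \<in> insert 0 ((\<lambda>k. eps_op (gamma n x k A) (\<alpha> k)) ` {1..N})"
    unfolding f_q_def by (intro Max_in) auto
  then show ?thesis using assms unfolding eps_op_def by (auto split: if_splits)
qed

lemma f_q_vanishes_on_null_set:
  assumes mono: "\<forall>A B. A \<subseteq> B \<longrightarrow> B \<subseteq> {1..n} \<longrightarrow> mu A \<le> mu B"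
    and "A \<subset> {1..n}" "mu A = 0" "\<forall>k\<in>{1..N}. sugeno n mu (x k) = \<alpha> k"
  shows "f_q n N x \<alpha> A = 0"
proof -
  have "\<forall>k\<in>{1..N}. \<alpha> k \<le> max (gamma n x k A) 0"
    using sugeno_le_max_gamma[OF assms(1,2)] assms(3,4) by metis
  then have "f_q n N x \<alpha> A \<le> 0" using f_q_le_iff[of 0] by simp
  then show ?thesis using f_q_nonneg by (rule order.antisym)
qed

lemma f_q_le_solution:
  assumes "\<forall>A \<in> sigma_idx n q. 0 \<le> \<xi> A" "sigma_solves n q N x \<alpha> \<xi>" "A \<in> sigma_idx n q"
  shows "f_q n N x \<alpha> A \<le> \<xi> A"
proof -
  have "\<alpha> k \<le> max (gamma n x k A) (\<xi> A)" if "k \<in> {1..N}" for k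
  proof -
    have "\<alpha> k = Min ((\<lambda>A. max (gamma n x k A) (\<xi> A)) ` sigma_idx n q)"
      using assms(2) that unfolding sigma_solves_def by simp
    also have "\<dots> \<le> max (gamma n x k A) (\<xi> A)" using finite_sigma_idx assms(3) by simp
    finally show ?thesis .
  qed
  then show ?thesis using f_q_le_iff assms(1,3) by blast
qed

lemma f_q_solves:
  assumes "\<forall>A \<in> sigma_idx n q. 0 \<le> \<xi> A" "sigma_solves n q N x \<alpha> \<xi>" "sigma_idx n q \<noteq> {}"
  shows "sigma_solves n q N x \<alpha> (f_q n N x \<alpha>)"
  unfolding sigma_solves_def
proof
  fix k assume k: "k \<in> {1..N}"
  let ?h = "\<lambda>A. max (gamma n x k A) (\<xi> A)"
  have "Min (?h ` sigma_idx n q) \<in> ?h ` sigma_idx n q"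
    using finite_sigma_idx assms(3) by (intro Min_in) auto
  then obtain A where A: "A \<in> sigma_idx n q" "max (gamma n x k A) (\<xi> A) = \<alpha> k"
    using assms(2) k unfolding sigma_solves_def by auto
  have "max (gamma n x k A) (f_q n N x \<alpha> A) \<le> \<alpha> k"
    using f_q_le_solution[OF assms(1,2) A(1)] A(2) by linarith
  then show "Min ((\<lambda>A. max (gamma n x k A) (f_q n N x \<alpha> A)) ` sigma_idx n q) = \<alpha> k"
    using finite_sigma_idx le_max_gamma_f_q[OF k] A(1) by (intro Min_image_eqI) auto
qed

definition minitive_ext :: "nat \<Rightarrow> nat \<Rightarrow> (nat set \<Rightarrow> real) \<Rightarrow> nat set \<Rightarrow> real" where
  "minitive_ext n q g X =
     (if n - q \<le> card X then g X else Min (g ` large_supersets n q X))"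

lemma minitive_ext_large: "n - q \<le> card X \<Longrightarrow> minitive_ext n q g X = g X"
  unfolding minitive_ext_def by simp

lemma q_minitive_minitive_ext: "q_minitive n q (minitive_ext n q g)"
  unfolding q_minitive_iff
proof (intro allI impI)
  fix X :: "nat set" assume "X \<subseteq> {1..n}" "card X < n - q"
  moreover have "minitive_ext n q g ` large_supersets n q X = g ` large_supersets n q X"
    by (intro image_cong) (auto simp: large_supersets_def minitive_ext_large)
  ultimately show "minitive_ext n q g X = Min (minitive_ext n q g ` large_supersets n q X)"
    unfolding minitive_ext_def by simp
qed

text \<open>The value at the full set is forced to be 1: \<open>f_q\<close> is meaningless there, since
  \<open>gamma\<close> of the full set is a maximum over the empty set.\<close>

definition f_q_capacity ::
  "nat \<Rightarrow> nat \<Rightarrow> nat \<Rightarrow> (nat \<Rightarrow> nat \<Rightarrow> real) \<Rightarrow> (nat \<Rightarrow> real) \<Rightarrow> nat set \<Rightarrow> real" where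
  "f_q_capacity n q N x \<alpha> = minitive_ext n q (\<lambda>Y. if Y = {1..n} then 1 else f_q n N x \<alpha> Y)"

lemma q_minitive_f_q_capacity: "q_minitive n q (f_q_capacity n q N x \<alpha>)"
  unfolding f_q_capacity_def by (rule q_minitive_minitive_ext)

lemma f_q_capacity_sigma_idx: "A \<in> sigma_idx n q \<Longrightarrow> f_q_capacity n q N x \<alpha> A = f_q n N x \<alpha> A"
  unfolding f_q_capacity_def sigma_idx_def by (auto simp: minitive_ext_large)

lemma is_capacity_f_q_capacity:
  assumes L: "L \<subseteq> {0..1}" "0 \<in> L" "1 \<in> L" and \<alpha>: "\<forall>k\<in>{1..N}. \<alpha> k \<in> L"
    and A0: "A0 \<subset> {1..n}" "card A0 = n - q" "f_q n N x \<alpha> A0 = 0"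
  shows "is_capacity L n (f_q_capacity n q N x \<alpha>)"
proof -
  define g where "g Y = (if Y = {1..n} then 1 else f_q n N x \<alpha> Y)" for Y
  define mu where "mu = f_q_capacity n q N x \<alpha>"
  have mu_ext: "mu = minitive_ext n q g" unfolding mu_def g_def f_q_capacity_def ..
  have f_L: "f_q n N x \<alpha> A \<in> L" for A using f_q_in_scale[OF L(2) \<alpha>] .
  have g_L: "g Y \<in> L" for Y using f_L L(3) unfolding g_def by simp
  have g_mono: "g A \<le> g B" if "A \<subseteq> B" "B \<subseteq> {1..n}" for A B
  proof (cases "B = {1..n}")
    case True
    have "f_q n N x \<alpha> A \<le> 1" using f_L L(1) by force
    then show ?thesis using True unfolding g_def by simp
  next
    case False
    then show ?thesis using that f_q_mono[OF that(1)] unfolding g_def by auto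
  qed
  have mono: "\<forall>A B. A \<subseteq> B \<longrightarrow> B \<subseteq> {1..n} \<longrightarrow> mu A \<le> mu B"
    unfolding mu_ext
  proof (rule q_minitive_mono[OF q_minitive_minitive_ext], intro allI impI)
    fix A B assume AB: "A \<subseteq> B" "B \<subseteq> {1..n}" "n - q \<le> card A"
    moreover have "card A \<le> card B" using AB by (intro card_mono) (auto intro: finite_subset)
    ultimately show "minitive_ext n q g A \<le> minitive_ext n q g B"
      using g_mono by (simp add: minitive_ext_large)
  qed
  have mu_L: "mu X \<in> L" if X: "X \<subseteq> {1..n}" for X
  proof -
    obtain Y where "n - q \<le> card Y" "mu X = mu Y"
      using q_minitive_attained[OF q_minitive_minitive_ext X] unfolding mu_ext by blast
    then show ?thesis using g_L unfolding mu_ext by (simp add: minitive_ext_large)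
  qed
  have "mu {} \<le> mu A0" using mono A0(1) by blast
  also have "\<dots> = 0" using A0 unfolding mu_ext g_def by (simp add: minitive_ext_large)
  finally have "mu {} = 0" using mu_L[of "{}"] L(1) by force
  moreover have "mu {1..n} = 1" unfolding mu_ext g_def by (simp add: minitive_ext_large)
  ultimately show ?thesis using mu_L mono unfolding is_capacity_def mu_def by blast
qed

theorem theorem3:
  fixes L :: "real set" and n q N :: nat
    and x :: "nat \<Rightarrow> nat \<Rightarrow> real" and \<alpha> :: "nat \<Rightarrow> real"
  assumes "valid_scale L"
    and "q \<in> {1..n}"
    and "\<forall>k \<in> {1..N}. (\<forall>i \<in> {1..n}. x k i \<in> L) \<and> \<alpha> k \<in> L"
  shows "(\<exists>mu. is_capacity L n mu \<and> q_minitive n q mu \<and>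
             (\<forall>k \<in> {1..N}. sugeno n mu (x k) = \<alpha> k))
         \<longleftrightarrow>
         (sigma_consistent L n q N x \<alpha> \<and>
          (\<exists>A. A \<subset> {1..n} \<and> card A = n - q \<and> f_q n N x \<alpha> A = 0))"
proof -
  let ?interpolates = "\<lambda>mu. is_capacity L n mu \<and> q_minitive n q mu \<and>
                                (\<forall>k \<in> {1..N}. sugeno n mu (x k) = \<alpha> k)"
  let ?null_set = "\<lambda>A. A \<subset> {1..n} \<and> card A = n - q \<and> f_q n N x \<alpha> A = 0"
  have L: "L \<subseteq> {0..1}" "0 \<in> L" "1 \<in> L" using assms(1) unfolding valid_scale_def by auto
  have q: "1 \<le> q" "1 \<le> n" using assms(2) by auto
  have \<alpha>: "\<forall>k\<in>{1..N}. \<alpha> k \<in> L" using assms(3) by blast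
  have x1: "\<forall>k\<in>{1..N}. \<forall>i\<in>{1..n}. x k i \<le> 1" using assms(3) L(1) by force
  show ?thesis
  proof
    assume "\<exists>mu. ?interpolates mu"
    then obtain mu where cap: "is_capacity L n mu" and qm: "q_minitive n q mu"
      and sug: "\<forall>k \<in> {1..N}. sugeno n mu (x k) = \<alpha> k" by blast
    have mono: "\<forall>A B. A \<subseteq> B \<longrightarrow> B \<subseteq> {1..n} \<longrightarrow> mu A \<le> mu B"
      and mu_L: "\<forall>A \<in> sigma_idx n q. mu A \<in> L"
      using cap unfolding is_capacity_def sigma_idx_def by auto
    have "sigma_solves n q N x \<alpha> mu" using sigma_solves_iff_sugeno[OF cap qm q(1) x1] sug by blast
    then have "sigma_consistent L n q N x \<alpha>" using mu_L unfolding sigma_consistent_iff by blast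
    moreover obtain A where A: "A \<subset> {1..n}" "card A = n - q" "mu A = 0"
      using q_minitive_capacity_null_set[OF cap qm q(1)] .
    moreover have "f_q n N x \<alpha> A = 0" using f_q_vanishes_on_null_set[OF mono A(1,3) sug] .
    ultimately show "sigma_consistent L n q N x \<alpha> \<and> (\<exists>A. ?null_set A)" by blast
  next
    assume "sigma_consistent L n q N x \<alpha> \<and> (\<exists>A. ?null_set A)"
    then obtain \<xi> A0 where \<xi>: "\<forall>A \<in> sigma_idx n q. \<xi> A \<in> L" "sigma_solves n q N x \<alpha> \<xi>"
      and A0: "A0 \<subset> {1..n}" "card A0 = n - q" "f_q n N x \<alpha> A0 = 0"
      unfolding sigma_consistent_iff by blast
    let ?mu = "f_q_capacity n q N x \<alpha>"
    have cap: "is_capacity L n ?mu" using is_capacity_f_q_capacity[OF L \<alpha> A0] .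
    have "sigma_solves n q N x \<alpha> (f_q n N x \<alpha>)"
      using f_q_solves[OF _ \<xi>(2) sigma_idx_nonempty[OF q]] \<xi>(1) L(1) by force
    then have "sigma_solves n q N x \<alpha> ?mu" using sigma_solves_cong f_q_capacity_sigma_idx by metis
    then have "\<forall>k \<in> {1..N}. sugeno n ?mu (x k) = \<alpha> k"
      using sigma_solves_iff_sugeno[OF cap q_minitive_f_q_capacity q(1) x1] by blast
    then show "\<exists>mu. ?interpolates mu" using cap q_minitive_f_q_capacity by blast
  qed
qed

end
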